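(* Assume (H4). Let $M,N\in\mathbb{N}$. The operator $T_{M,N}\colon X_{M}\to X_{M}$ has the same nonzero eigenvalues, with the same geometric and partial multiplicities, as the operator $\widehat{T}_{M,N}:=P_{M}T_{M,N}R_{M}\colon\widetilde{X}\to\widetilde{X}$. Moreover, if $\Phi\in X_{M}$ is an eigenvector of $T_{M,N}$ associated to a nonzero eigenvalue $\mu$, then $P_{M}\Phi\in\widetilde{X}$ is an eigenvector of $\widehat{T}_{M,N}$ associated to the same eigenvalue $\mu$.
   Context: Let $d\ge 1$ be an integer and $\tau>0$, $h\ge\tau$ real. $X$, $X^{+}$, $X^{\pm}$ are real normed spaces of functions $[-\tau,0]\to\mathbb{R}^{d}$, $[0,h]\to\mathbb{R}^{d}$, $[-\tau,h]\to\mathbb{R}^{d}$, respectively. For a function $u$ on $[-\tau,h]$, $u_{h}(\theta):=u(h+\theta)$, $\theta\in[-\tau,0]$. $V\colon X\times X^{+}\to X^{\pm}$ and $\mathcal{F}_{s}\colon X^{\pm}\to X^{+}$ are linear with $V(\phi,z)|_{[-\tau,0]}=\phi$. Let $\widetilde{X}\subseteq X$ and $\widetilde{X}^{+}\subseteq X^{+}$ be linear subspaces. For $M\in\mathbb{N}$, $X_{M}$ is a finite-dimensional space, $R_{M}\colon\widetilde{X}\to X_{M}$, $P_{M}\colon X_{M}\to X$ are linear with $R_{M}P_{M}=I_{X_{M}}$, $\mathcal{L}_{M}:=P_{M}R_{M}$, and $\Pi_{M}$ is the range of $P_{M}$. For $N\in\mathbb{N}$, analogously $X_{N}^{+}$,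 $R_{N}^{+}\colon\widetilde{X}^{+}\to X_{N}^{+}$, $P_{N}^{+}\colon X_{N}^{+}\to X^{+}$ with $R_{N}^{+}P_{N}^{+}=I_{X_{N}^{+}}$, and $\Pi_{N}^{+}$ the range of $P_{N}^{+}$. The operator $T_{M,N}\colon X_{M}\to X_{M}$ is defined by $T_{M,N}\Phi:=R_{M}V(P_{M}\Phi,P_{N}^{+}Z^{\ast})_{h}$, where $Z^{\ast}\in X_{N}^{+}$ is the (assumed unique) solution of $Z=R_{N}^{+}\mathcal{F}_{s}V(P_{M}\Phi,P_{N}^{+}Z)$. Hypothesis (H4): for all $M,N\in\mathbb{N}$, $\Pi_{M}\subseteq\Pi_{M+1}$, $\Pi_{N}^{+}\subseteq\Pi_{N+1}^{+}$, $\Pi_{M}\subseteq\widetilde{X}$, $\Pi_{N}^{+}\subseteq\widetilde{X}^{+}$, and for all $(\phi,z)\in\Pi_{M}\times\Pi_{N}^{+}$, $V(\phi,z)_{h}\in\widetilde{X}$ and $\mathcal{F}_{s}V(\phi,z)\in\widetilde{X}^{+}$. A partial multiplicity of an eigenvalue is the length of an associated Jordan chain. *)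

theory Defs
  imports "HOL-Analysis.Analysis" "HOL-Library.Function_Algebras"
begin

instantiation "fun" :: (type, real_vector) real_vector
begin
definition scaleR_fun :: "real \<Rightarrow> ('a \<Rightarrow> 'b) \<Rightarrow> 'a \<Rightarrow> 'b"
  where "scaleR_fun r f = (\<lambda>x. r *\<^sub>R f x)"
instance
  by standard (auto simp: scaleR_fun_def fun_eq_iff scaleR_add_right scaleR_add_left)
end

text \<open>A function on an interval [a,b] is represented by its extension by zero to the
  whole real line; hence the spaces X, X+, X+- are sets of functions real => real^d
  vanishing outside [-tau,0], [0,h], [-tau,h] respectively.\<close>

definition supported_in :: "real set \<Rightarrow> (real \<Rightarrow> 'v::zero) set \<Rightarrow> bool" where
  "supported_in I S \<longleftrightarrow> (\<forall>f\<in>S. \<forall>t. t \<notin> I \<longrightarrow> f t = 0)"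

definition restr :: "real \<Rightarrow> real \<Rightarrow> (real \<Rightarrow> 'v::zero) \<Rightarrow> real \<Rightarrow> 'v" where
  "restr a b u = (\<lambda>t. if t \<in> {a..b} then u t else 0)"

definition seg :: "real \<Rightarrow> real \<Rightarrow> (real \<Rightarrow> 'v::zero) \<Rightarrow> real \<Rightarrow> 'v" where
  "seg tau h u = (\<lambda>\<theta>. if \<theta> \<in> {-tau..0} then u (h + \<theta>) else 0)"

definition lin_on :: "'a::real_vector set \<Rightarrow> ('a \<Rightarrow> 'b::real_vector) \<Rightarrow> bool" where
  "lin_on S f \<longleftrightarrow> (\<forall>x\<in>S. \<forall>y\<in>S. f (x + y) = f x + f y) \<and> (\<forall>c. \<forall>x\<in>S. f (c *\<^sub>R x) = c *\<^sub>R f x)"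

definition lin2_on :: "'a::real_vector set \<Rightarrow> 'b::real_vector set \<Rightarrow> ('a \<Rightarrow> 'b \<Rightarrow> 'c::real_vector) \<Rightarrow> bool" where
  "lin2_on S1 S2 f \<longleftrightarrow>
     (\<forall>x\<in>S1. \<forall>y\<in>S2. \<forall>x'\<in>S1. \<forall>y'\<in>S2. f (x + x') (y + y') = f x y + f x' y') \<and>
     (\<forall>c. \<forall>x\<in>S1. \<forall>y\<in>S2. f (c *\<^sub>R x) (c *\<^sub>R y) = c *\<^sub>R f x y)"

definition finite_dim_subspace :: "'a::real_vector set \<Rightarrow> bool" where
  "finite_dim_subspace S \<longleftrightarrow> subspace S \<and> (\<exists>B. finite B \<and> B \<subseteq> S \<and> span B = S)"

text \<open>Z* = the (assumed unique) solution Z in X_N^+ of Z = R_N^+ F_s V(P_M Phi, P_N^+ Z)\<close>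
definition Zstar :: "'p set \<Rightarrow> ((real \<Rightarrow> 'v) \<Rightarrow> 'p) \<Rightarrow> ('p \<Rightarrow> real \<Rightarrow> 'v)
    \<Rightarrow> ((real \<Rightarrow> 'v) \<Rightarrow> (real \<Rightarrow> 'v)) \<Rightarrow> ((real \<Rightarrow> 'v) \<Rightarrow> (real \<Rightarrow> 'v) \<Rightarrow> (real \<Rightarrow> 'v))
    \<Rightarrow> ('m \<Rightarrow> real \<Rightarrow> 'v) \<Rightarrow> 'm \<Rightarrow> 'p" where
  "Zstar XN RN PN Fs V PM \<Phi> = (THE Z. Z \<in> XN \<and> Z = RN (Fs (V (PM \<Phi>) (PN Z))))"

definition T_MN :: "real \<Rightarrow> real \<Rightarrow> ((real \<Rightarrow> 'v::zero) \<Rightarrow> 'm) \<Rightarrow> ('m \<Rightarrow> real \<Rightarrow> 'v)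
    \<Rightarrow> 'p set \<Rightarrow> ((real \<Rightarrow> 'v) \<Rightarrow> 'p) \<Rightarrow> ('p \<Rightarrow> real \<Rightarrow> 'v)
    \<Rightarrow> ((real \<Rightarrow> 'v) \<Rightarrow> (real \<Rightarrow> 'v)) \<Rightarrow> ((real \<Rightarrow> 'v) \<Rightarrow> (real \<Rightarrow> 'v) \<Rightarrow> (real \<Rightarrow> 'v))
    \<Rightarrow> 'm \<Rightarrow> 'm" where
  "T_MN tau h RM PM XN RN PN Fs V \<Phi> =
     RM (seg tau h (V (PM \<Phi>) (PN (Zstar XN RN PN Fs V PM \<Phi>))))"

text \<open>The complexification of a real subspace S is represented as S x S, the pair (u,v)
  standing for u + i v.\<close>

definition cx :: "('a \<Rightarrow> 'a) \<Rightarrow> 'a \<times> 'a \<Rightarrow> 'a \<times> 'a" where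
  "cx A w = (A (fst w), A (snd w))"

definition cscale :: "complex \<Rightarrow> 'a::real_vector \<times> 'a \<Rightarrow> 'a \<times> 'a" where
  "cscale \<mu> w = (Re \<mu> *\<^sub>R fst w - Im \<mu> *\<^sub>R snd w, Re \<mu> *\<^sub>R snd w + Im \<mu> *\<^sub>R fst w)"

definition is_eigenvector :: "'a::real_vector set \<Rightarrow> ('a \<Rightarrow> 'a) \<Rightarrow> complex \<Rightarrow> 'a \<times> 'a \<Rightarrow> bool" where
  "is_eigenvector S A \<mu> w \<longleftrightarrow> w \<in> S \<times> S \<and> w \<noteq> 0 \<and> cx A w = cscale \<mu> w"

definition is_eigenvalue :: "'a::real_vector set \<Rightarrow> ('a \<Rightarrow> 'a) \<Rightarrow> complex \<Rightarrow> bool" where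
  "is_eigenvalue S A \<mu> \<longleftrightarrow> (\<exists>w. is_eigenvector S A \<mu> w)"

text \<open>complex dimension of a complex subspace W of S x S (real dimension divided by 2)\<close>
definition cdim :: "('a::real_vector \<times> 'a) set \<Rightarrow> nat" where
  "cdim W = dim W div 2"

definition geom_mult :: "'a::real_vector set \<Rightarrow> ('a \<Rightarrow> 'a) \<Rightarrow> complex \<Rightarrow> nat" where
  "geom_mult S A \<mu> = cdim {w \<in> S \<times> S. cx A w = cscale \<mu> w}"

definition jordan_chain :: "'a::real_vector set \<Rightarrow> ('a \<Rightarrow> 'a) \<Rightarrow> complex \<Rightarrow> ('a \<times> 'a) list \<Rightarrow> bool" where
  "jordan_chain S A \<mu> xs \<longleftrightarrow> xs \<noteq> [] \<and> set xs \<subseteq> S \<times> S \<and> is_eigenvector S A \<mu> (xs ! 0) \<and>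
     (\<forall>j. Suc j < length xs \<longrightarrow> cx A (xs ! Suc j) - cscale \<mu> (xs ! Suc j) = xs ! j)"

text \<open>The partial multiplicities r_1 >= r_2 >= ... of mu (lengths of the Jordan chains of a
  canonical system) are determined by the numbers #{i. r_i >= k}, k >= 1, which equal the
  complex dimension of the space spanned by the eigenvectors that start a Jordan chain of
  length k.  Two operators have the same partial multiplicities at mu iff these numbers agree
  for all k >= 1.\<close>
definition num_partial_mult_ge :: "'a::real_vector set \<Rightarrow> ('a \<Rightarrow> 'a) \<Rightarrow> complex \<Rightarrow> nat \<Rightarrow> nat" where
  "num_partial_mult_ge S A \<mu> k =
     cdim (span {xs ! 0 | xs. jordan_chain S A \<mu> xs \<and> length xs = k})"

definition same_partial_mults ::
  "'a::real_vector set \<Rightarrow> ('a \<Rightarrow> 'a) \<Rightarrow> 'b::real_vector set \<Rightarrow> ('b \<Rightarrow> 'b) \<Rightarrow> complex \<Rightarrow> bool" where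
  "same_partial_mults S A S' A' \<mu> \<longleftrightarrow>
     (\<forall>k\<ge>1. num_partial_mult_ge S A \<mu> k = num_partial_mult_ge S' A' \<mu> k)"

end

theory Submission
  imports Defs
begin

(*
  Since R_M P_M = I, the map P_M intertwines T with T^ = P_M T R_M (P_M T = T^ P_M on X_M), and R_M
  intertwines back (R_M T^ = T R_M on X~).  Applied componentwise to the complexification, P_M maps
  eigenvectors and Jordan chains of T injectively to those of T^, and R_M maps those of T^ back.
  For mu /= 0 an eigenvector w of T^ equals mu^-1 T^ w, so it lies in the range of P_M, where P_M R_M
  is the identity.  Hence the eigenspace of T^, and the set of eigenvectors heading Jordan chains of a
  given length, are the images of those of T under the injective linear map P_M, which preserves
  dimension.
*)

lemma lin_on_0:
  assumes "subspace S" "lin_on S f"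
  shows "f 0 = 0"
  using assms unfolding lin_on_def subspace_def by (metis scale_zero_left)

lemma lin_on_diff:
  assumes "subspace S" "lin_on S f" "x \<in> S" "y \<in> S"
  shows "f (x - y) = f x - f y"
proof -
  have "(-1) *\<^sub>R y \<in> S" using assms(1,4) subspace_scale by blast
  then have "f (x + (-1) *\<^sub>R y) = f x + f ((-1) *\<^sub>R y)" "f ((-1) *\<^sub>R y) = (-1) *\<^sub>R f y"
    using assms(2-4) unfolding lin_on_def by blast+
  then show ?thesis by simp
qed

lemma lin_on_map_prod:
  assumes "lin_on S f" "lin_on T g"
  shows "lin_on (S \<times> T) (map_prod f g)"
  using assms unfolding lin_on_def by auto

lemma lin_on_eq_linear_on_span:
  assumes U: "subspace U" and f: "lin_on U f" and g: "linear g"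
    and B: "B \<subseteq> U" and agree: "\<And>x. x \<in> B \<Longrightarrow> g x = f x" and x: "x \<in> span B"
  shows "g x = f x"
proof -
  have "subspace {x \<in> U. g x = f x}"
    using U f lin_on_0[OF U f] unfolding subspace_def lin_on_def
    by (auto simp: linear_0[OF g] linear_add[OF g] linear_scale[OF g])
  then show ?thesis
    using span_induct[OF x, of "\<lambda>x. x \<in> U \<and> g x = f x"] B agree by auto
qed

lemma dim_image_linear:
  assumes lf: "linear f" and fi: "inj_on f (span S)"
  shows "dim (f ` S) = dim S"
proof -
  obtain B where B: "B \<subseteq> S" "independent B" "S \<subseteq> span B" "card B = dim S"
    by (rule basis_exists)
  then have span_S: "span S = span B"
    by (meson span_mono span_minimal subset_antisym subspace_span)
  have "dim (f ` S) = dim (f ` span B)"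
    using span_S dim_span span_linear_image[OF lf] by metis
  also have "\<dots> = dim (span (f ` B))"
    using span_linear_image[OF lf] by metis
  also have "\<dots> = card (f ` B)"
    using linear_dependent_inj_imageD[OF lf] fi span_S B(2) dim_span_eq_card_independent by auto
  also have "\<dots> = card B"
    using fi B(1) span_superset by (metis card_image inj_on_subset)
  finally show ?thesis using B(4) by simp
qed

lemma dim_image_lin_on:
  assumes U: "subspace U" and f: "lin_on U f" and inj: "inj_on f U" and S: "S \<subseteq> U"
  shows "dim (f ` S) = dim S"
proof -
  obtain B where B: "B \<subseteq> S" "independent B" "S \<subseteq> span B" "card B = dim S"
    by (rule basis_exists)
  obtain g where g: "linear g" "\<forall>x\<in>B. g x = f x"
    using linear_independent_extend[OF B(2)] by blast
  have "span S = span B"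
    using B by (meson span_mono span_minimal subset_antisym subspace_span)
  moreover have "B \<subseteq> U" using B(1) S by blast
  ultimately have g_eq_f: "\<And>x. x \<in> span S \<Longrightarrow> g x = f x"
    using lin_on_eq_linear_on_span[OF U f g(1)] g(2) by simp
  have "inj_on f (span S)"
    using inj_on_subset[OF inj span_minimal[OF S U]] .
  then have "inj_on g (span S)"
    using inj_on_cong[of "span S" g f, OF g_eq_f] by simp
  moreover have "g ` S = f ` S"
    using g_eq_f span_superset by (intro image_cong) auto
  ultimately show ?thesis
    using dim_image_linear[OF g(1)] by metis
qed

lemma cscale_cscale: "cscale a (cscale b w) = cscale (a * b) (w :: 'a::real_vector \<times> 'a)"
  by (simp add: cscale_def algebra_simps scaleR_add_right scaleR_diff_right)

lemma cscale_one [simp]: "cscale 1 w = w"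
  by (simp add: cscale_def)

lemma cscale_mem: "subspace S \<Longrightarrow> w \<in> S \<times> S \<Longrightarrow> cscale \<mu> w \<in> S \<times> S"
  by (auto simp: cscale_def subspace_add subspace_diff subspace_scale)

lemma map_prod_cscale:
  assumes S: "subspace S" and f: "lin_on S f" and w: "w \<in> S \<times> S"
  shows "map_prod f f (cscale \<mu> w) = cscale \<mu> (map_prod f f w)"
proof -
  obtain a b where ab: "w = (a, b)" "a \<in> S" "b \<in> S" using w by auto
  have add: "\<And>x y. x \<in> S \<Longrightarrow> y \<in> S \<Longrightarrow> f (x + y) = f x + f y"
    and scale: "\<And>c x. x \<in> S \<Longrightarrow> f (c *\<^sub>R x) = c *\<^sub>R f x"
    using f unfolding lin_on_def by blast+
  have "\<And>c x. x \<in> S \<Longrightarrow> c *\<^sub>R x \<in> S" using S subspace_scale by blast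
  then show ?thesis
    using ab by (simp add: cscale_def lin_on_diff[OF S f] add scale)
qed

lemma map_prod_diff:
  assumes "subspace S" "lin_on S f" "v \<in> S \<times> S" "w \<in> S \<times> S"
  shows "map_prod f f (v - w) = map_prod f f v - map_prod f f w"
  using assms by (auto simp: lin_on_diff)

locale intertwining =
  fixes S :: "'a::real_vector set" and U :: "'b::real_vector set"
    and A :: "'a \<Rightarrow> 'a" and B :: "'b \<Rightarrow> 'b" and f :: "'a \<Rightarrow> 'b"
  assumes subspace_S: "subspace S" and lin: "lin_on S f" and maps_into: "\<And>x. x \<in> S \<Longrightarrow> f x \<in> U"
    and A_maps_into: "\<And>x. x \<in> S \<Longrightarrow> A x \<in> S"
    and intertwines: "\<And>x. x \<in> S \<Longrightarrow> f (A x) = B (f x)"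
begin

lemma map_prod_mem: "w \<in> S \<times> S \<Longrightarrow> map_prod f f w \<in> U \<times> U"
  by (auto simp: maps_into)

lemma cx_A_mem: "w \<in> S \<times> S \<Longrightarrow> cx A w \<in> S \<times> S"
  by (auto simp: cx_def A_maps_into)

lemma map_prod_cx: "w \<in> S \<times> S \<Longrightarrow> map_prod f f (cx A w) = cx B (map_prod f f w)"
  by (auto simp: cx_def intertwines)

lemma map_prod_eigen_equation:
  assumes "w \<in> S \<times> S" "cx A w = cscale \<mu> w"
  shows "cx B (map_prod f f w) = cscale \<mu> (map_prod f f w)"
  using assms map_prod_cx map_prod_cscale[OF subspace_S lin] by metis

lemma is_eigenvector_map_prod:
  assumes "is_eigenvector S A \<mu> w" "map_prod f f w \<noteq> 0"
  shows "is_eigenvector U B \<mu> (map_prod f f w)"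
  using assms map_prod_mem map_prod_eigen_equation unfolding is_eigenvector_def by blast

lemma jordan_chain_map_prod:
  assumes chain: "jordan_chain S A \<mu> xs" and head: "map_prod f f (xs ! 0) \<noteq> 0"
  shows "jordan_chain U B \<mu> (map (map_prod f f) xs)"
  unfolding jordan_chain_def
proof (intro conjI allI impI)
  have xs: "xs \<noteq> []" "set xs \<subseteq> S \<times> S" "is_eigenvector S A \<mu> (xs ! 0)"
    using chain unfolding jordan_chain_def by auto
  then show "map (map_prod f f) xs \<noteq> []" "set (map (map_prod f f) xs) \<subseteq> U \<times> U"
      "is_eigenvector U B \<mu> (map (map_prod f f) xs ! 0)"
    using map_prod_mem is_eigenvector_map_prod head by auto
  fix j assume "Suc j < length (map (map_prod f f) xs)"
  then have j: "Suc j < length xs" by simp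
  then have x: "xs ! Suc j \<in> S \<times> S" using xs(2) nth_mem by blast
  have "cx B (map_prod f f (xs ! Suc j)) - cscale \<mu> (map_prod f f (xs ! Suc j))
      = map_prod f f (cx A (xs ! Suc j) - cscale \<mu> (xs ! Suc j))"
    using map_prod_diff[OF subspace_S lin cx_A_mem[OF x] cscale_mem[OF subspace_S x]]
      map_prod_cx[OF x] map_prod_cscale[OF subspace_S lin x] by simp
  also have "\<dots> = map_prod f f (xs ! j)"
    using chain j unfolding jordan_chain_def by simp
  finally show "cx B (map (map_prod f f) xs ! Suc j) - cscale \<mu> (map (map_prod f f) xs ! Suc j)
      = map (map_prod f f) xs ! j"
    using j by simp
qed

end

locale embedded_operator =
  fixes S :: "'a::real_vector set" and U :: "'b::real_vector set"
    and A :: "'a \<Rightarrow> 'a" and P :: "'a \<Rightarrow> 'b" and R :: "'b \<Rightarrow> 'a" and B :: "'b \<Rightarrow> 'b"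
  assumes subspace_S: "subspace S" and subspace_U: "subspace U"
    and A_maps_into: "\<And>x. x \<in> S \<Longrightarrow> A x \<in> S"
    and lin_P: "lin_on S P" and P_maps_into: "\<And>x. x \<in> S \<Longrightarrow> P x \<in> U"
    and lin_R: "lin_on U R" and R_maps_into: "\<And>u. u \<in> U \<Longrightarrow> R u \<in> S"
    and R_P: "\<And>x. x \<in> S \<Longrightarrow> R (P x) = x"
    and B_eq: "B = (\<lambda>u. P (A (R u)))"
begin

sublocale embedding: intertwining S U A B P
  by unfold_locales (simp_all add: subspace_S lin_P P_maps_into A_maps_into B_eq R_P)

sublocale retraction: intertwining U S B A R
  by unfold_locales (simp_all add: subspace_U lin_R R_maps_into A_maps_into P_maps_into B_eq R_P)

lemma R_P_pair: "w \<in> S \<times> S \<Longrightarrow> map_prod R R (map_prod P P w) = w"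
  by (auto simp: R_P)

lemma inj_on_map_prod_P: "inj_on (map_prod P P) (S \<times> S)"
  by (metis R_P_pair inj_onI)

lemma map_prod_P_0: "map_prod P P 0 = 0"
  by (simp add: zero_prod_def lin_on_0[OF subspace_S lin_P])

lemma P_R_eigen_equation:
  assumes \<mu>: "\<mu> \<noteq> 0" and w: "w \<in> U \<times> U" "cx B w = cscale \<mu> w"
  shows "map_prod P P (map_prod R R w) = w"
proof -
  define v where "v = cx A (map_prod R R w)"
  have v: "v \<in> S \<times> S"
    unfolding v_def using w(1) by (intro embedding.cx_A_mem retraction.map_prod_mem)
  have "w = cscale (1 / \<mu>) (cx B w)"
    using \<mu> w(2) by (simp add: cscale_cscale)
  also have "cx B w = map_prod P P v"
    by (simp add: v_def cx_def B_eq)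
  also have "cscale (1 / \<mu>) (map_prod P P v) = map_prod P P (cscale (1 / \<mu>) v)"
    using map_prod_cscale[OF subspace_S lin_P v] by simp
  finally show ?thesis
    using R_P_pair cscale_mem[OF subspace_S v] by metis
qed

lemma is_eigenvector_map_prod_P:
  assumes "is_eigenvector S A \<mu> w"
  shows "is_eigenvector U B \<mu> (map_prod P P w)"
proof -
  have "map_prod P P w \<noteq> map_prod P P 0"
    using assms inj_on_map_prod_P subspace_0[OF subspace_S]
    unfolding is_eigenvector_def inj_on_def zero_prod_def by blast
  then show ?thesis
    using embedding.is_eigenvector_map_prod[OF assms] map_prod_P_0 by simp
qed

lemma is_eigenvector_map_prod_R:
  assumes \<mu>: "\<mu> \<noteq> 0" and w: "is_eigenvector U B \<mu> w"
  shows "is_eigenvector S A \<mu> (map_prod R R w)"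
proof -
  have "map_prod R R w \<noteq> 0"
    using P_R_eigen_equation[OF \<mu>] w map_prod_P_0 unfolding is_eigenvector_def by metis
  then show ?thesis
    using retraction.is_eigenvector_map_prod[OF w] by simp
qed

lemma is_eigenvalue_iff: "\<mu> \<noteq> 0 \<Longrightarrow> is_eigenvalue S A \<mu> \<longleftrightarrow> is_eigenvalue U B \<mu>"
  unfolding is_eigenvalue_def using is_eigenvector_map_prod_P is_eigenvector_map_prod_R by blast

lemma eigenspace_eq_image:
  assumes \<mu>: "\<mu> \<noteq> 0"
  shows "{w \<in> U \<times> U. cx B w = cscale \<mu> w} = map_prod P P ` {w \<in> S \<times> S. cx A w = cscale \<mu> w}"
proof (intro subset_antisym subsetI)
  fix w assume "w \<in> {w \<in> U \<times> U. cx B w = cscale \<mu> w}"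
  then have w: "w \<in> U \<times> U" "cx B w = cscale \<mu> w" by auto
  have "map_prod R R w \<in> {w \<in> S \<times> S. cx A w = cscale \<mu> w}"
    using retraction.map_prod_mem[OF w(1)] retraction.map_prod_eigen_equation[OF w] by simp
  then show "w \<in> map_prod P P ` {w \<in> S \<times> S. cx A w = cscale \<mu> w}"
    by (rule image_eqI[where f = "map_prod P P", OF P_R_eigen_equation[OF \<mu> w, symmetric]])
next
  fix w assume "w \<in> map_prod P P ` {w \<in> S \<times> S. cx A w = cscale \<mu> w}"
  then obtain v where w: "w = map_prod P P v" and "v \<in> {w \<in> S \<times> S. cx A w = cscale \<mu> w}"
    by (rule imageE)
  then have v: "v \<in> S \<times> S" "cx A v = cscale \<mu> v" by auto
  show "w \<in> {w \<in> U \<times> U. cx B w = cscale \<mu> w}"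
    using embedding.map_prod_mem[OF v(1)] embedding.map_prod_eigen_equation[OF v] w by simp
qed

lemma jordan_chain_heads_eq_image:
  assumes \<mu>: "\<mu> \<noteq> 0"
  shows "{ys ! 0 | ys. jordan_chain U B \<mu> ys \<and> length ys = k} =
    map_prod P P ` {xs ! 0 | xs. jordan_chain S A \<mu> xs \<and> length xs = k}"
proof (intro subset_antisym subsetI)
  fix w assume "w \<in> {ys ! 0 | ys. jordan_chain U B \<mu> ys \<and> length ys = k}"
  then obtain ys where ys: "jordan_chain U B \<mu> ys" "length ys = k" and w: "w = ys ! 0"
    by auto
  then have "ys \<noteq> []" and head: "is_eigenvector U B \<mu> w"
    unfolding jordan_chain_def by auto
  have "map_prod R R w \<noteq> 0"
    using is_eigenvector_map_prod_R[OF \<mu> head] unfolding is_eigenvector_def by blast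
  then have "jordan_chain S A \<mu> (map (map_prod R R) ys)"
    using retraction.jordan_chain_map_prod[OF ys(1)] w by blast
  then have "map_prod R R w \<in> {xs ! 0 | xs. jordan_chain S A \<mu> xs \<and> length xs = k}"
    using \<open>ys \<noteq> []\<close> w ys(2) by (auto intro!: exI[of _ "map (map_prod R R) ys"])
  moreover have "w = map_prod P P (map_prod R R w)"
    using P_R_eigen_equation[OF \<mu>] head unfolding is_eigenvector_def by metis
  ultimately show "w \<in> map_prod P P ` {xs ! 0 | xs. jordan_chain S A \<mu> xs \<and> length xs = k}"
    by (rule rev_image_eqI)
next
  fix w assume "w \<in> map_prod P P ` {xs ! 0 | xs. jordan_chain S A \<mu> xs \<and> length xs = k}"
  then obtain v where w: "w = map_prod P P v"
    and "v \<in> {xs ! 0 | xs. jordan_chain S A \<mu> xs \<and> length xs = k}"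
    by (rule imageE)
  then obtain xs where xs: "jordan_chain S A \<mu> xs" "length xs = k" and v: "v = xs ! 0"
    by auto
  then have "xs \<noteq> []" and "is_eigenvector U B \<mu> w"
    using is_eigenvector_map_prod_P w unfolding jordan_chain_def by auto
  then have "jordan_chain U B \<mu> (map (map_prod P P) xs)"
    using embedding.jordan_chain_map_prod[OF xs(1)] v w unfolding is_eigenvector_def by auto
  then show "w \<in> {ys ! 0 | ys. jordan_chain U B \<mu> ys \<and> length ys = k}"
    using \<open>xs \<noteq> []\<close> v w xs(2) by (auto intro!: exI[of _ "map (map_prod P P) xs"])
qed

lemma cdim_image_map_prod_P:
  assumes "W \<subseteq> S \<times> S"
  shows "cdim (map_prod P P ` W) = cdim W"
  unfolding cdim_def
  by (simp only: dim_image_lin_on[OF subspace_Times[OF subspace_S subspace_S]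
        lin_on_map_prod[OF lin_P lin_P] inj_on_map_prod_P assms])

lemma geom_mult_eq:
  assumes "\<mu> \<noteq> 0"
  shows "geom_mult S A \<mu> = geom_mult U B \<mu>"
  unfolding geom_mult_def eigenspace_eq_image[OF assms] by (rule cdim_image_map_prod_P[symmetric]) blast

lemma same_partial_mults:
  assumes \<mu>: "\<mu> \<noteq> 0"
  shows "same_partial_mults S A U B \<mu>"
proof -
  have "{xs ! 0 | xs. jordan_chain S A \<mu> xs \<and> length xs = k} \<subseteq> S \<times> S" for k
    unfolding jordan_chain_def is_eigenvector_def by auto
  then show ?thesis
    unfolding same_partial_mults_def num_partial_mult_ge_def jordan_chain_heads_eq_image[OF \<mu>]
    by (simp add: cdim_def dim_span cdim_image_map_prod_P[unfolded cdim_def])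
qed

end

lemma Zstar_mem:
  assumes "\<exists>!Z. Z \<in> N \<and> Z = RN (Fs (V (PM \<Phi>) (PN Z)))"
  shows "Zstar N RN PN Fs V PM \<Phi> \<in> N"
  using theI'[OF assms] unfolding Zstar_def by blast

lemma T_MN_mem:
  assumes "\<forall>\<phi>\<in>Xt. RM \<phi> \<in> S" and "\<forall>\<phi>\<in>PM ` S. \<forall>z\<in>PN ` N. seg tau h (V \<phi> z) \<in> Xt"
    and "\<exists>!Z. Z \<in> N \<and> Z = RN (Fs (V (PM \<Phi>) (PN Z)))" and "\<Phi> \<in> S"
  shows "T_MN tau h RM PM N RN PN Fs V \<Phi> \<in> S"
proof -
  have "Zstar N RN PN Fs V PM \<Phi> \<in> N"
    using assms(3) by (rule Zstar_mem)
  then show ?thesis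
    using assms(1,2,4) unfolding T_MN_def by blast
qed

theorem proposition4p4:
  fixes tau h :: real
    and X Xp Xpm Xt Xpt :: "(real \<Rightarrow> real ^ 'd::finite) set"
    and V :: "(real \<Rightarrow> real ^ 'd) \<Rightarrow> (real \<Rightarrow> real ^ 'd) \<Rightarrow> (real \<Rightarrow> real ^ 'd)"
    and Fs :: "(real \<Rightarrow> real ^ 'd) \<Rightarrow> (real \<Rightarrow> real ^ 'd)"
    and XM :: "nat \<Rightarrow> 'm::real_vector set"
    and RM :: "nat \<Rightarrow> (real \<Rightarrow> real ^ 'd) \<Rightarrow> 'm"
    and PM :: "nat \<Rightarrow> 'm \<Rightarrow> (real \<Rightarrow> real ^ 'd)"
    and XN :: "nat \<Rightarrow> 'p::real_vector set"
    and RN :: "nat \<Rightarrow> (real \<Rightarrow> real ^ 'd) \<Rightarrow> 'p"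
    and PN :: "nat \<Rightarrow> 'p \<Rightarrow> (real \<Rightarrow> real ^ 'd)"
    and M N :: nat
  assumes tau: "tau > 0" and h: "h \<ge> tau"
    \<comment> \<open>the function spaces\<close>
    and X: "subspace X" "supported_in {-tau..0} X"
    and Xp: "subspace Xp" "supported_in {0..h} Xp"
    and Xpm: "subspace Xpm" "supported_in {-tau..h} Xpm"
    \<comment> \<open>V and F_s\<close>
    and V_into: "\<forall>\<phi>\<in>X. \<forall>z\<in>Xp. V \<phi> z \<in> Xpm"
    and V_lin: "lin2_on X Xp V"
    and V_restr: "\<forall>\<phi>\<in>X. \<forall>z\<in>Xp. restr (-tau) 0 (V \<phi> z) = \<phi>"
    and Fs_into: "\<forall>u\<in>Xpm. Fs u \<in> Xp"
    and Fs_lin: "lin_on Xpm Fs"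
    \<comment> \<open>the subspaces X~ and X~+\<close>
    and Xt: "subspace Xt" "Xt \<subseteq> X"
    and Xpt: "subspace Xpt" "Xpt \<subseteq> Xp"
    \<comment> \<open>discretization of X\<close>
    and XM: "\<forall>M. finite_dim_subspace (XM M)"
    and RM: "\<forall>M. lin_on Xt (RM M) \<and> (\<forall>\<phi>\<in>Xt. RM M \<phi> \<in> XM M)"
    and PM: "\<forall>M. lin_on (XM M) (PM M) \<and> (\<forall>\<Phi>\<in>XM M. PM M \<Phi> \<in> X)"
    and RPM: "\<forall>M. \<forall>\<Phi>\<in>XM M. RM M (PM M \<Phi>) = \<Phi>"
    \<comment> \<open>discretization of X+\<close>
    and XN: "\<forall>N. finite_dim_subspace (XN N)"
    and RN: "\<forall>N. lin_on Xpt (RN N) \<and> (\<forall>z\<in>Xpt. RN N z \<in> XN N)"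
    and PN: "\<forall>N. lin_on (XN N) (PN N) \<and> (\<forall>Z\<in>XN N. PN N Z \<in> Xp)"
    and RPN: "\<forall>N. \<forall>Z\<in>XN N. RN N (PN N Z) = Z"
    \<comment> \<open>hypothesis (H4)\<close>
    and H4: "\<forall>M N. PM M ` XM M \<subseteq> PM (Suc M) ` XM (Suc M) \<and>
                    PN N ` XN N \<subseteq> PN (Suc N) ` XN (Suc N) \<and>
                    PM M ` XM M \<subseteq> Xt \<and> PN N ` XN N \<subseteq> Xpt \<and>
                    (\<forall>\<phi>\<in>PM M ` XM M. \<forall>z\<in>PN N ` XN N.
                        seg tau h (V \<phi> z) \<in> Xt \<and> Fs (V \<phi> z) \<in> Xpt)"
    \<comment> \<open>unique solvability of the fixed point equation defining Z*\<close>
    and uniq: "\<forall>\<Phi>\<in>XM M. \<exists>!Z. Z \<in> XN N \<and> Z = RN N (Fs (V (PM M \<Phi>) (PN N Z)))"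
  defines "T \<equiv> T_MN tau h (RM M) (PM M) (XN N) (RN N) (PN N) Fs V"
    and "That \<equiv> (\<lambda>\<phi>. PM M (T_MN tau h (RM M) (PM M) (XN N) (RN N) (PN N) Fs V (RM M \<phi>)))"
  shows "(\<forall>\<mu>::complex. \<mu> \<noteq> 0 \<longrightarrow>
           (is_eigenvalue (XM M) T \<mu> \<longleftrightarrow> is_eigenvalue Xt That \<mu>) \<and>
           (is_eigenvalue (XM M) T \<mu> \<longrightarrow>
              geom_mult (XM M) T \<mu> = geom_mult Xt That \<mu> \<and>
              same_partial_mults (XM M) T Xt That \<mu>)) \<and>
         (\<forall>\<mu>::complex. \<forall>\<Phi>. \<mu> \<noteq> 0 \<longrightarrow> is_eigenvector (XM M) T \<mu> \<Phi> \<longrightarrow>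
           is_eigenvector Xt That \<mu> (PM M (fst \<Phi>), PM M (snd \<Phi>)))"
proof -
  have T_maps_into: "T \<Phi> \<in> XM M" if \<Phi>: "\<Phi> \<in> XM M" for \<Phi>
    unfolding T_def
  proof (rule T_MN_mem[where Xt = Xt, OF _ _ _ \<Phi>])
    show "\<forall>\<phi>\<in>Xt. RM M \<phi> \<in> XM M" using RM by blast
    show "\<forall>\<phi>\<in>PM M ` XM M. \<forall>z\<in>PN N ` XN N. seg tau h (V \<phi> z) \<in> Xt" using H4 by blast
    show "\<exists>!Z. Z \<in> XN N \<and> Z = RN N (Fs (V (PM M \<Phi>) (PN N Z)))" using uniq \<Phi> by blast
  qed
  interpret embedded_operator "XM M" Xt T "PM M" "RM M" That
  proof
    show "subspace (XM M)" using XM unfolding finite_dim_subspace_def by blast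
    show "lin_on (XM M) (PM M)" "lin_on Xt (RM M)" using PM RM by blast+
    show "\<And>\<Phi>. \<Phi> \<in> XM M \<Longrightarrow> PM M \<Phi> \<in> Xt" using H4 by blast
    show "\<And>\<phi>. \<phi> \<in> Xt \<Longrightarrow> RM M \<phi> \<in> XM M" using RM by blast
    show "\<And>\<Phi>. \<Phi> \<in> XM M \<Longrightarrow> RM M (PM M \<Phi>) = \<Phi>" using RPM by blast
    show "That = (\<lambda>\<phi>. PM M (T (RM M \<phi>)))" unfolding That_def T_def ..
  qed (use Xt(1) T_maps_into in auto)
  have "is_eigenvector Xt That \<mu> (PM M (fst \<Phi>), PM M (snd \<Phi>))"
    if "is_eigenvector (XM M) T \<mu> \<Phi>" for \<mu> \<Phi>
    using is_eigenvector_map_prod_P[OF that] by (simp add: map_prod_def split_beta)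
  then show ?thesis
    using is_eigenvalue_iff geom_mult_eq same_partial_mults by blast
qed

end
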